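(* Let $d\ge 2$. For $\omega>0$ consider the eigenvalue problem on the unit hypercube $[0,1]^d$ with impedance boundary condition: \[ -\Delta v - \omega^2 v = \lambda v\ \text{ in }[0,1]^d,\qquad \partial_n v - \mathrm{i}\omega v = 0\ \text{ on } \partial[0,1]^d, \] where $\lambda\in\mathbb{C}$ is an eigenvalue if there is a nonzero function $v$ solving this problem. Then for every fixed $\rho\in (0,1)$ there exist a constant $s>0$ and $\omega_0>0$ such that for all $\omega\ge\omega_0$, every eigenvalue $\lambda$ of this problem with $|\lambda|\leq\rho\,\omega^2$ satisfies $|\operatorname{Im}(\lambda)|\geq s\,\omega$.
   Context: $\partial_n$ denotes the derivative in the direction of the outward unit normal to the boundary of the hypercube. *)

theory Defs
  imports "HOL-Analysis.Analysis"
begin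

definition unit_cube :: "(real ^ 'n) set" where
  "unit_cube = {x. \<forall>i. 0 \<le> x $ i \<and> x $ i \<le> 1}"

text \<open>Classical eigenpair of the impedance problem
  -Laplace v - w^2 v = lam v in the cube, d_n v - i w v = 0 on the boundary.
  v is C^1 up to the boundary (partial derivatives g i, taken within the
  closed cube, exist and are continuous on the closed cube), C^2 in the open
  cube (second partials h i j exist and are continuous there), the PDE holds
  pointwise in the open cube, the impedance condition holds on every face
  (outward normal derivative on face x_i = 0 is -g i, on face x_i = 1 is g i),
  and v is not identically zero on the cube.\<close>
definition impedance_eigenpair :: "real \<Rightarrow> complex \<Rightarrow> (real ^ 'n \<Rightarrow> complex) \<Rightarrow> bool" where
  "impedance_eigenpair \<omega> lam v \<longleftrightarrow>
     (\<exists>x\<in>unit_cube. v x \<noteq> 0) \<and>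
     continuous_on unit_cube v \<and>
     (\<exists>g :: 'n \<Rightarrow> real ^ 'n \<Rightarrow> complex. \<exists>h :: 'n \<Rightarrow> 'n \<Rightarrow> real ^ 'n \<Rightarrow> complex.
        (\<forall>i. continuous_on unit_cube (g i)) \<and>
        (\<forall>i. \<forall>x\<in>unit_cube.
            ((\<lambda>t. v (x + t *\<^sub>R axis i 1)) has_vector_derivative g i x)
              (at 0 within {t. x + t *\<^sub>R axis i 1 \<in> unit_cube})) \<and>
        (\<forall>i j. continuous_on (interior unit_cube) (h i j)) \<and>
        (\<forall>i j. \<forall>x\<in>interior unit_cube.
            ((\<lambda>t. g i (x + t *\<^sub>R axis j 1)) has_vector_derivative h i j x) (at 0)) \<and>
        (\<forall>x\<in>interior unit_cube.
            - (\<Sum>i\<in>UNIV. h i i x) - complex_of_real (\<omega>\<^sup>2) * v x = lam * v x) \<and>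
        (\<forall>x\<in>unit_cube. \<forall>i.
            (x $ i = 0 \<longrightarrow> - g i x - \<i> * complex_of_real \<omega> * v x = 0) \<and>
            (x $ i = 1 \<longrightarrow> g i x - \<i> * complex_of_real \<omega> * v x = 0)))"

end

theory Submission
  imports Defs
begin

text \<open>Write k^2 = \<omega>^2 + \<lambda>. Multiplying the equation -\<Delta>v = k^2 v by the conjugate of v and
  integrating by parts (Green) gives, via the impedance condition, ||\<nabla>v||^2 = Re(k^2) ||v||^2 and
  -Im(\<lambda>) ||v||^2 = \<omega> ||v||^2_\<partial>. Multiplying instead by the conjugate of (x - c)\<cdot>\<nabla>v, with c the
  centre of the cube, gives a Rellich identity; on the cube the boundary terms are controlled by
  \<omega> and ||v||_\<partial>, and combining it with the two Green identities and AM-GM yields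
  2 Re(k^2) \<omega> \<le> |Im \<lambda>| (d \<omega>^2 + Re(k^2)). If |\<lambda>| \<le> \<rho> \<omega>^2 then
  (1 - \<rho>) \<omega>^2 \<le> Re(k^2) \<le> 2 \<omega>^2, hence |Im \<lambda>| \<ge> 2 (1 - \<rho>) \<omega> / (d + 2).\<close>

definition coord_upd :: "real^'n \<Rightarrow> 'n \<Rightarrow> real \<Rightarrow> real^'n" where
  "coord_upd x i t = x + (t - x$i) *\<^sub>R axis i 1"

lemma coord_upd_nth [simp]: "coord_upd x i t $ j = (if j = i then t else x $ j)"
  by (simp add: coord_upd_def axis_def)

lemma coord_upd_same [simp]: "coord_upd x i (x$i) = x"
  by (simp add: vec_eq_iff)

lemma coord_upd_add_axis: "coord_upd x i t + s *\<^sub>R axis i 1 = coord_upd x i (t + s)"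
  by (simp add: vec_eq_iff axis_def)

lemma continuous_coord_upd [continuous_intros]:
  "continuous F f \<Longrightarrow> continuous F g \<Longrightarrow> continuous F (\<lambda>z. coord_upd (f z) i (g z))"
  unfolding coord_upd_def by (intro continuous_intros)

lemma continuous_on_coord_upd [continuous_intros]:
  "continuous_on S f \<Longrightarrow> continuous_on S g \<Longrightarrow> continuous_on S (\<lambda>z. coord_upd (f z) i (g z))"
  unfolding coord_upd_def by (intro continuous_intros)

lemma tendsto_coord_upd [tendsto_intros]:
  "(f \<longlongrightarrow> a) F \<Longrightarrow> (g \<longlongrightarrow> b) F \<Longrightarrow> ((\<lambda>z. coord_upd (f z) i (g z)) \<longlongrightarrow> coord_upd a i b) F"
  unfolding coord_upd_def by (intro tendsto_intros)

lemma coord_upd_in_unit_cube: "x \<in> unit_cube \<Longrightarrow> 0 \<le> c \<Longrightarrow> c \<le> 1 \<Longrightarrow> coord_upd x i c \<in> unit_cube"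
  by (auto simp: unit_cube_def)

lemma unit_cube_eq_cbox: "unit_cube = cbox 0 (\<chi> j. 1)"
  by (auto simp: unit_cube_def mem_box_cart)

lemma interior_unit_cube: "interior unit_cube = box 0 (\<chi> j. 1)"
  by (simp add: unit_cube_eq_cbox)

lemma continuous_on_coord_upd_unit_cube:
  assumes "continuous_on unit_cube f" "0 \<le> c" "c \<le> 1"
  shows "continuous_on unit_cube (\<lambda>x. f (coord_upd x i c))"
  by (rule continuous_on_compose2[OF assms(1)])
     (use assms in \<open>auto intro!: continuous_intros coord_upd_in_unit_cube\<close>)

lemma integrable_on_unit_cube:
  "continuous_on unit_cube f \<Longrightarrow> (f :: real^'n \<Rightarrow> 'b::banach) integrable_on unit_cube"
  unfolding unit_cube_eq_cbox by (rule integrable_continuous)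

lemma has_vector_derivative_at_shift:
  fixes f :: "real \<Rightarrow> 'a::real_normed_vector"
  assumes "((\<lambda>s. f (t + s)) has_vector_derivative d) (at 0)"
  shows "(f has_vector_derivative d) (at t)"
proof -
  have "((\<lambda>\<tau>. \<tau> - t) has_vector_derivative 1) (at t)"
    by (auto intro!: derivative_eq_intros simp: has_real_derivative_iff_has_vector_derivative[symmetric])
  moreover have "((\<lambda>s. f (t + s)) has_vector_derivative d) (at ((\<lambda>\<tau>. \<tau> - t) t))"
    using assms by simp
  ultimately show ?thesis using vector_diff_chain_at by (fastforce simp: o_def)
qed

lemma content_cbox_cart_max:
  fixes u v :: "real^'n"
  shows "Henstock_Kurzweil_Integration.content (cbox u v) = (\<Prod>j\<in>UNIV. max 0 (v$j - u$j))"
proof (cases "\<forall>j. u$j \<le> v$j")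
  case True
  then show ?thesis by (simp add: content_cbox_cart interval_ne_empty_cart(1))
next
  case False
  then obtain j where "v$j < u$j" by (auto simp: not_le)
  then have "cbox u v = {}" using interval_ne_empty_cart(1) by (meson not_le)
  moreover have "max 0 (v$j - u$j) = 0" using \<open>v$j < u$j\<close> by simp
  ultimately show ?thesis by (auto intro!: prod_zero)
qed

definition swap_coord :: "'n \<Rightarrow> (real^'n) \<times> real \<Rightarrow> (real^'n) \<times> real" where
  "swap_coord i p = (coord_upd (fst p) i (snd p), fst p $ i)"

lemma swap_coord_swap_coord [simp]: "swap_coord i (swap_coord i p) = p"
  by (cases p) (simp add: swap_coord_def vec_eq_iff)

lemma swap_coord_cbox:
  "swap_coord i ` cbox (u,a) (v,b) = cbox (coord_upd u i a, u$i) (coord_upd v i b, v$i)"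
proof -
  have "y \<in> swap_coord i ` cbox (u,a) (v,b) \<longleftrightarrow> swap_coord i y \<in> cbox (u,a) (v,b)" for y
    by (rule iffI) (auto intro: image_eqI[of y "swap_coord i" "swap_coord i y"])
  moreover have "swap_coord i y \<in> cbox (u,a) (v,b) \<longleftrightarrow>
      y \<in> cbox (coord_upd u i a, u$i) (coord_upd v i b, v$i)" for y
    by (cases y) (auto simp: swap_coord_def cbox_Pair_eq mem_box_cart split: if_splits)
  ultimately show ?thesis by blast
qed

lemma content_swap_coord_cbox:
  "Henstock_Kurzweil_Integration.content (swap_coord i ` cbox p q)
     = Henstock_Kurzweil_Integration.content (cbox p q)"
proof -
  obtain u a v b where "p = (u,a)" "q = (v,b)" by (cases p, cases q)
  then show ?thesis
    by (simp add: swap_coord_cbox content_Pair content_cbox_cart_max content_real_if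
          prod.remove[of UNIV i] ac_simps)
qed

text \<open>Fubini on the product of the box with its i-th side, applied twice through the
  measure-preserving swap of the extra variable with the i-th coordinate.\<close>

lemma integral_cbox_integral_along_coord:
  fixes D :: "real^'n \<Rightarrow> 'a::banach" and lo hi :: "real^'n"
  assumes "lo$i \<le> hi$i" and cD: "continuous_on (cbox lo hi) D"
  shows "integral (cbox lo hi) (\<lambda>x. integral {lo$i..hi$i} (\<lambda>t. D (coord_upd x i t)))
           = (hi$i - lo$i) *\<^sub>R integral (cbox lo hi) D"
proof -
  let ?P = "cbox (lo, lo$i) (hi, hi$i)"
  have cP1: "continuous_on ?P (\<lambda>p. D (fst p))"
    unfolding cbox_Pair_eq by (rule continuous_on_compose2[OF cD]) (auto intro!: continuous_intros)
  have cP2: "continuous_on ?P (\<lambda>p. D (coord_upd (fst p) i (snd p)))"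
    unfolding cbox_Pair_eq
    by (rule continuous_on_compose2[OF cD]) (auto intro!: continuous_intros simp: mem_box_cart)
  have "((\<lambda>p. D (fst (swap_coord i p))) has_integral (1/1) *\<^sub>R integral ?P (\<lambda>p. D (fst p)))
      (swap_coord i ` ?P)"
  proof (rule has_integral_twiddle[where h = "swap_coord i"])
    show "\<exists>w z. swap_coord i ` cbox u v = cbox w z" for u v
      by (cases u, cases v) (auto simp: swap_coord_cbox)
    then show "\<exists>w z. swap_coord i ` cbox u v = cbox w z" for u v .
    show "continuous (at x) (swap_coord i)" for x
      unfolding swap_coord_def by (intro continuous_intros)
    show "((\<lambda>p. D (fst p)) has_integral integral ?P (\<lambda>p. D (fst p))) ?P"
      using cP1 integrable_continuous integrable_integral by blast
  qed (auto simp: content_swap_coord_cbox)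
  moreover have "swap_coord i ` ?P = ?P" by (simp add: swap_coord_cbox)
  ultimately have "integral ?P (\<lambda>p. D (coord_upd (fst p) i (snd p))) = integral ?P (\<lambda>p. D (fst p))"
    by (simp add: swap_coord_def integral_unique)
  then show ?thesis
    using integral_prod_continuous[OF cP1] integral_prod_continuous[OF cP2] assms(1)
    by (simp add: content_real_if)
qed

lemma integral_partial_derivative_cbox:
  fixes F D :: "real^'n \<Rightarrow> 'a::banach" and lo hi :: "real^'n"
  assumes "lo$i \<le> hi$i" and cD: "continuous_on (cbox lo hi) D"
    and dF: "\<And>x. x \<in> cbox lo hi \<Longrightarrow> ((\<lambda>t. F (x + t *\<^sub>R axis i 1)) has_vector_derivative D x) (at 0)"
  shows "(hi$i - lo$i) *\<^sub>R integral (cbox lo hi) D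
           = integral (cbox lo hi) (\<lambda>x. F (coord_upd x i (hi$i)) - F (coord_upd x i (lo$i)))"
proof -
  have "integral {lo$i..hi$i} (\<lambda>t. D (coord_upd x i t))
      = F (coord_upd x i (hi$i)) - F (coord_upd x i (lo$i))" if x: "x \<in> cbox lo hi" for x
  proof (rule integral_unique, rule fundamental_theorem_of_calculus)
    fix t assume t: "t \<in> {lo$i..hi$i}"
    then have "coord_upd x i t \<in> cbox lo hi" using x by (auto simp: mem_box_cart)
    from dF[OF this] have "((\<lambda>s. F (coord_upd x i (t + s))) has_vector_derivative D (coord_upd x i t)) (at 0)"
      by (simp add: coord_upd_add_axis)
    then have "((\<lambda>s. F (coord_upd x i s)) has_vector_derivative D (coord_upd x i t)) (at t)"
      by (rule has_vector_derivative_at_shift)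
    then show "((\<lambda>t. F (coord_upd x i t)) has_vector_derivative D (coord_upd x i t))
        (at t within {lo$i..hi$i})"
      by (rule has_vector_derivative_at_within)
  qed (use assms(1) in simp)
  then show ?thesis
    using integral_cbox_integral_along_coord[OF assms(1) cD] by (metis (no_types, lifting) integral_cong)
qed

subsection \<open>The divergence theorem on the unit cube\<close>

definition centered_cube :: "real \<Rightarrow> (real^'n) set" where
  "centered_cube r = cbox (\<chi> j. (1 - r) / 2) (\<chi> j. (1 + r) / 2)"

lemma mem_centered_cube: "x \<in> centered_cube r \<longleftrightarrow> (\<forall>j. (1 - r) / 2 \<le> x$j \<and> x$j \<le> (1 + r) / 2)"
  by (simp add: centered_cube_def mem_box_cart)

lemma centered_cube_subset_interior:
  assumes "0 < r" "r < 1"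
  shows "centered_cube r \<subseteq> interior unit_cube"
proof
  fix x :: "real^'n" assume "x \<in> centered_cube r"
  then have bounds: "(1 - r) / 2 \<le> x$i \<and> x$i \<le> (1 + r) / 2" for i
    by (simp add: mem_centered_cube)
  have "0 < x$i \<and> x$i < 1" for i using bounds[of i] assms by (auto simp: field_simps)
  then show "x \<in> interior unit_cube" by (simp add: interior_unit_cube mem_box_cart)
qed

lemma eventually_mem_centered_cube:
  assumes r: "r \<longlonglongrightarrow> 1" and x: "x \<in> interior unit_cube"
  shows "eventually (\<lambda>n. x \<in> centered_cube (r n)) sequentially"
proof -
  have "\<bar>2 * x$j - 1\<bar> < 1" for j
    using x by (auto simp: interior_unit_cube mem_box_cart abs_less_iff)
  then have "eventually (\<lambda>n. \<forall>j. \<bar>2 * x$j - 1\<bar> < r n) sequentially"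
    using r by (intro eventually_all_finite allI) (auto intro: order_tendstoD(1))
  then show ?thesis
    by eventually_elim (auto simp: mem_centered_cube abs_less_iff, (smt (verit))+)
qed

text \<open>Identities proved on the open cube, where the functions are C^2, pass to the closed cube
  through this exhaustion.\<close>

lemma tendsto_integral_centered_cube:
  fixes f :: "nat \<Rightarrow> real^'n \<Rightarrow> complex"
  assumes r: "\<And>n. 0 < r n \<and> r n < 1" "r \<longlonglongrightarrow> 1"
    and cf: "\<And>n. continuous_on (centered_cube (r n)) (f n)"
    and bound: "\<And>n x. x \<in> centered_cube (r n) \<Longrightarrow> norm (f n x) \<le> B"
    and lim: "\<And>x. x \<in> interior unit_cube \<Longrightarrow> (\<lambda>n. f n x) \<longlonglongrightarrow> l x"
  shows "(\<lambda>n. integral (centered_cube (r n)) (f n)) \<longlonglongrightarrow> integral unit_cube l"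
proof -
  let ?B = "box 0 (\<chi> j. 1) :: (real^'n) set"
  define G where "G n x = (if x \<in> centered_cube (r n) then f n x else 0)" for n x
  have sub: "centered_cube (r n) \<inter> ?B = centered_cube (r n)" for n
    using centered_cube_subset_interior[of "r n"] r(1)[of n] by (auto simp: interior_unit_cube)
  have "(\<lambda>n. integral ?B (G n)) \<longlonglongrightarrow> integral ?B l"
  proof (rule dominated_convergence(2))
    show "G n integrable_on ?B" for n
      unfolding G_def integrable_restrict_Int sub
      by (simp add: centered_cube_def cf[unfolded centered_cube_def] integrable_continuous)
    show "(\<lambda>x. B) integrable_on ?B"
      by (simp add: integrable_on_open_interval integrable_const)
    have "B \<ge> 0" using bound[of "\<chi> j. 1/2" 0] r(1)[of 0]
      by (auto simp: mem_centered_cube) (meson norm_ge_zero order_trans)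
    then show "norm (G n x) \<le> B" for n x using bound by (auto simp: G_def)
    show "(\<lambda>n. G n x) \<longlonglongrightarrow> l x" if "x \<in> ?B" for x
    proof -
      have "x \<in> interior unit_cube" using that by (simp add: interior_unit_cube)
      from eventually_mem_centered_cube[OF r(2) this] lim[OF this]
      show ?thesis by (rule_tac Lim_transform_eventually) (auto elim: eventually_mono simp: G_def)
    qed
  qed
  moreover have "integral ?B (G n) = integral (centered_cube (r n)) (f n)" for n
    unfolding G_def integral_restrict_Int sub ..
  ultimately show ?thesis by (simp add: integral_open_interval unit_cube_eq_cbox)
qed

lemma integral_divergence_centered_cube:
  fixes F Di :: "'n \<Rightarrow> real^'n \<Rightarrow> complex"
  assumes r: "0 < r" "r < 1"
    and cDi: "\<And>i. continuous_on (interior unit_cube) (Di i)"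
    and dF: "\<And>i x. x \<in> interior unit_cube \<Longrightarrow>
              ((\<lambda>t. F i (x + t *\<^sub>R axis i 1)) has_vector_derivative Di i x) (at 0)"
    and sumD: "\<And>x. x \<in> interior unit_cube \<Longrightarrow> (\<Sum>i\<in>UNIV. Di i x) = D x"
  shows "r *\<^sub>R integral (centered_cube r) D = (\<Sum>i\<in>UNIV. integral (centered_cube r)
           (\<lambda>x. F i (coord_upd x i ((1 + r) / 2)) - F i (coord_upd x i ((1 - r) / 2))))"
proof -
  have Qint: "centered_cube r \<subseteq> interior unit_cube"
    using r by (rule centered_cube_subset_interior)
  have "integral (centered_cube r) D = integral (centered_cube r) (\<lambda>x. \<Sum>i\<in>UNIV. Di i x)"
    using sumD Qint by (intro integral_cong) auto
  also have "\<dots> = (\<Sum>i\<in>UNIV. integral (centered_cube r) (Di i))"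
    by (rule integral_sum) (auto simp: centered_cube_def
        intro!: integrable_continuous continuous_on_subset[OF cDi Qint[unfolded centered_cube_def]])
  finally have "r *\<^sub>R integral (centered_cube r) D = (\<Sum>i\<in>UNIV. r *\<^sub>R integral (centered_cube r) (Di i))"
    by (simp add: scaleR_sum_right)
  also have "\<dots> = (\<Sum>i\<in>UNIV. integral (centered_cube r)
           (\<lambda>x. F i (coord_upd x i ((1 + r) / 2)) - F i (coord_upd x i ((1 - r) / 2))))"
  proof (rule sum.cong[OF refl])
    fix i
    let ?lo = "\<chi> j. (1 - r) / 2 :: real^'n" and ?hi = "\<chi> j. (1 + r) / 2 :: real^'n"
    have "?hi$i - ?lo$i = r" by (simp add: field_simps)
    moreover have "(?hi$i - ?lo$i) *\<^sub>R integral (cbox ?lo ?hi) (Di i) = integral (cbox ?lo ?hi)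
        (\<lambda>x. F i (coord_upd x i (?hi$i)) - F i (coord_upd x i (?lo$i)))"
      using r continuous_on_subset[OF cDi Qint] dF Qint
      by (intro integral_partial_derivative_cbox) (auto simp: centered_cube_def)
    ultimately show "r *\<^sub>R integral (centered_cube r) (Di i) = integral (centered_cube r)
        (\<lambda>x. F i (coord_upd x i ((1 + r) / 2)) - F i (coord_upd x i ((1 - r) / 2)))"
      by (simp add: centered_cube_def)
  qed
  finally show ?thesis .
qed

lemma bounded_on_unit_cube:
  fixes f :: "real^'n \<Rightarrow> 'a::real_normed_vector"
  assumes "continuous_on unit_cube f"
  obtains B where "\<And>y. y \<in> unit_cube \<Longrightarrow> norm (f y) \<le> B"
  using compact_imp_bounded[OF compact_continuous_image[OF assms]]
  by (auto simp: unit_cube_eq_cbox bounded_iff)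

lemma tendsto_integral_faces_centered_cube:
  fixes F :: "real^'n \<Rightarrow> complex"
  assumes r: "\<And>n. 0 < r n \<and> r n < 1" "r \<longlonglongrightarrow> 1"
    and cF: "continuous_on unit_cube F"
  shows "(\<lambda>n. integral (centered_cube (r n))
           (\<lambda>x. F (coord_upd x i ((1 + r n) / 2)) - F (coord_upd x i ((1 - r n) / 2))))
         \<longlonglongrightarrow> integral unit_cube (\<lambda>x. F (coord_upd x i 1) - F (coord_upd x i 0))"
proof -
  obtain B where B: "\<And>y. y \<in> unit_cube \<Longrightarrow> norm (F y) \<le> B"
    using bounded_on_unit_cube[OF cF] by blast
  have Qcube: "centered_cube (r n) \<subseteq> unit_cube" for n
    using centered_cube_subset_interior[of "r n"] r(1)[of n] interior_subset by blast
  have face: "coord_upd x i ((1 + r n) / 2) \<in> unit_cube" "coord_upd x i ((1 - r n) / 2) \<in> unit_cube"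
    if "x \<in> unit_cube" for x n
    using r(1)[of n] that by (auto intro!: coord_upd_in_unit_cube)
  show ?thesis
  proof (rule tendsto_integral_centered_cube[OF r, where B = "B + B"])
    show "norm (F (coord_upd x i ((1 + r n) / 2)) - F (coord_upd x i ((1 - r n) / 2))) \<le> B + B"
      if "x \<in> centered_cube (r n)" for n x
      using that Qcube face B by (meson add_mono norm_triangle_ineq4 order_trans subsetD)
    show "continuous_on (centered_cube (r n))
        (\<lambda>x. F (coord_upd x i ((1 + r n) / 2)) - F (coord_upd x i ((1 - r n) / 2)))" for n
      using Qcube face by (intro continuous_intros continuous_on_compose2[OF cF]) blast+
    show "(\<lambda>n. F (coord_upd x i ((1 + r n) / 2)) - F (coord_upd x i ((1 - r n) / 2)))
        \<longlonglongrightarrow> F (coord_upd x i 1) - F (coord_upd x i 0)" if "x \<in> interior unit_cube" for x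
    proof -
      have x: "x \<in> unit_cube" using that interior_subset by blast
      have "(\<lambda>n. coord_upd x i ((1 + r n) / 2)) \<longlonglongrightarrow> coord_upd x i ((1 + 1) / 2)"
        "(\<lambda>n. coord_upd x i ((1 - r n) / 2)) \<longlonglongrightarrow> coord_upd x i ((1 - 1) / 2)"
        by (intro tendsto_intros r; simp)+
      then show ?thesis
        using face[OF x] x
        by (intro tendsto_diff continuous_on_tendsto_compose[OF cF])
           (auto intro!: coord_upd_in_unit_cube)
    qed
  qed
qed

theorem divergence_theorem_unit_cube:
  fixes F Di :: "'n \<Rightarrow> real^'n \<Rightarrow> complex" and D :: "real^'n \<Rightarrow> complex"
  assumes cF: "\<And>i. continuous_on unit_cube (F i)"
    and cDi: "\<And>i. continuous_on (interior unit_cube) (Di i)"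
    and cD: "continuous_on unit_cube D"
    and dF: "\<And>i x. x \<in> interior unit_cube \<Longrightarrow>
              ((\<lambda>t. F i (x + t *\<^sub>R axis i 1)) has_vector_derivative Di i x) (at 0)"
    and sumD: "\<And>x. x \<in> interior unit_cube \<Longrightarrow> (\<Sum>i\<in>UNIV. Di i x) = D x"
  shows "integral unit_cube D =
           (\<Sum>i\<in>UNIV. integral unit_cube (\<lambda>x. F i (coord_upd x i 1) - F i (coord_upd x i 0)))"
proof -
  define r where "r n = 1 - inverse (real (Suc (Suc n)))" for n
  have r: "0 < r n \<and> r n < 1" for n by (simp add: r_def field_simps)
  have rlim: "r \<longlonglongrightarrow> 1"
    using LIMSEQ_Suc[OF LIMSEQ_inverse_real_of_nat_add_minus[of 1]] by (simp add: r_def[abs_def])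
  have Qcube: "centered_cube (r n) \<subseteq> unit_cube" for n
    using centered_cube_subset_interior[of "r n"] r[of n] interior_subset by blast
  obtain B where B: "\<And>y. y \<in> unit_cube \<Longrightarrow> norm (D y) \<le> B"
    using bounded_on_unit_cube[OF cD] by blast
  have "(\<lambda>n. integral (centered_cube (r n)) D) \<longlonglongrightarrow> integral unit_cube D"
    using r rlim continuous_on_subset[OF cD Qcube] B Qcube
    by (intro tendsto_integral_centered_cube[where B = B]) blast+
  then have "(\<lambda>n. r n *\<^sub>R integral (centered_cube (r n)) D) \<longlonglongrightarrow> 1 *\<^sub>R integral unit_cube D"
    by (intro tendsto_scaleR rlim)
  moreover have "r n *\<^sub>R integral (centered_cube (r n)) D = (\<Sum>i\<in>UNIV. integral (centered_cube (r n))
      (\<lambda>x. F i (coord_upd x i ((1 + r n) / 2)) - F i (coord_upd x i ((1 - r n) / 2))))" for n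
    using r[of n] by (intro integral_divergence_centered_cube[where Di = Di] cDi dF sumD) auto
  moreover have "(\<lambda>n. \<Sum>i\<in>UNIV. integral (centered_cube (r n))
      (\<lambda>x. F i (coord_upd x i ((1 + r n) / 2)) - F i (coord_upd x i ((1 - r n) / 2))))
      \<longlonglongrightarrow> (\<Sum>i\<in>UNIV. integral unit_cube (\<lambda>x. F i (coord_upd x i 1) - F i (coord_upd x i 0)))"
    by (intro tendsto_sum tendsto_integral_faces_centered_cube[OF r rlim cF])
  ultimately show ?thesis using LIMSEQ_unique by fastforce
qed

subsection \<open>Symmetry of mixed partial derivatives\<close>

lemma norm_increment_le_derivative_deviation:
  fixes f :: "real \<Rightarrow> 'a::real_normed_vector"
  assumes s: "0 \<le> s"
    and df: "\<And>t. t \<in> {0..s} \<Longrightarrow> (f has_vector_derivative f' t) (at t within {0..s})"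
    and close: "\<And>t. t \<in> {0..s} \<Longrightarrow> norm (f' t - c) \<le> e"
  shows "norm (f s - f 0 - s *\<^sub>R c) \<le> e * s"
proof -
  have "norm ((f s - s *\<^sub>R c) - (f 0 - 0 *\<^sub>R c)) \<le> e * norm (s - 0)"
  proof (rule differentiable_bound[where f' = "\<lambda>t h. h *\<^sub>R (f' t - c)"])
    show "((\<lambda>t. f t - t *\<^sub>R c) has_derivative (\<lambda>h. h *\<^sub>R (f' t - c))) (at t within {0..s})"
      if "t \<in> {0..s}" for t
      using has_vector_derivative_diff[OF df[OF that]
          has_vector_derivative_scaleR[OF DERIV_ident has_vector_derivative_const[of c]]]
      by (simp add: has_vector_derivative_def)
    show "onorm (\<lambda>h. h *\<^sub>R (f' t - c)) \<le> e" if "t \<in> {0..s}" for t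
      using close[OF that] onorm_scaleR_left[OF bounded_linear_ident, of "f' t - c"] by (simp add: onorm_id)
  qed (use s in auto)
  then show ?thesis using s by (simp add: algebra_simps)
qed

lemma has_vector_derivative_along_line:
  fixes f :: "'a::real_normed_vector \<Rightarrow> 'b::real_normed_vector"
  assumes "((\<lambda>t. f (p + \<sigma> *\<^sub>R w + t *\<^sub>R w)) has_vector_derivative D) (at 0)"
  shows "((\<lambda>\<sigma>. f (p + \<sigma> *\<^sub>R w)) has_vector_derivative D) (at \<sigma>)"
proof (rule has_vector_derivative_at_shift)
  have "(\<lambda>s. f (p + (\<sigma> + s) *\<^sub>R w)) = (\<lambda>t. f (p + \<sigma> *\<^sub>R w + t *\<^sub>R w))"
    by (simp add: scaleR_add_left add.assoc)
  with assms show "((\<lambda>s. f (p + (\<sigma> + s) *\<^sub>R w)) has_vector_derivative D) (at 0)" by simp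
qed

lemma first_difference_approx:
  fixes g h :: "'a::real_normed_vector \<Rightarrow> 'b::real_normed_vector"
  assumes s: "0 \<le> s"
    and dg: "\<And>\<tau>. \<tau> \<in> {0..s} \<Longrightarrow>
              ((\<lambda>t. g (p + \<tau> *\<^sub>R b + t *\<^sub>R b)) has_vector_derivative h (p + \<tau> *\<^sub>R b)) (at 0)"
    and close: "\<And>\<tau>. \<tau> \<in> {0..s} \<Longrightarrow> norm (h (p + \<tau> *\<^sub>R b) - c) \<le> e"
  shows "norm (g (p + s *\<^sub>R b) - g p - s *\<^sub>R c) \<le> e * s"
proof -
  have "norm (g (p + s *\<^sub>R b) - g (p + 0 *\<^sub>R b) - s *\<^sub>R c) \<le> e * s"
    using s has_vector_derivative_at_within[OF has_vector_derivative_along_line[OF dg]] close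
    by (rule norm_increment_le_derivative_deviation)
  then show ?thesis by simp
qed

lemma second_difference_approx:
  fixes v g h :: "'a::real_normed_vector \<Rightarrow> 'b::real_normed_vector"
  assumes dv: "\<And>y. y \<in> U \<Longrightarrow> ((\<lambda>t. v (y + t *\<^sub>R a)) has_vector_derivative g y) (at 0)"
    and dg: "\<And>y. y \<in> U \<Longrightarrow> ((\<lambda>t. g (y + t *\<^sub>R b)) has_vector_derivative h y) (at 0)"
    and s: "0 \<le> s"
    and near: "\<And>\<sigma> \<tau>. \<sigma> \<in> {0..s} \<Longrightarrow> \<tau> \<in> {0..s} \<Longrightarrow>
       x + \<sigma> *\<^sub>R a + \<tau> *\<^sub>R b \<in> U \<and> norm (h (x + \<sigma> *\<^sub>R a + \<tau> *\<^sub>R b) - c) \<le> e"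
  shows "norm (v (x + s *\<^sub>R a + s *\<^sub>R b) - v (x + s *\<^sub>R a) - v (x + s *\<^sub>R b) + v x
           - (s * s) *\<^sub>R c) \<le> e * (s * s)"
proof -
  define f where "f \<sigma> = v (x + s *\<^sub>R b + \<sigma> *\<^sub>R a) - v (x + \<sigma> *\<^sub>R a)" for \<sigma>
  define f' where "f' \<sigma> = g (x + s *\<^sub>R b + \<sigma> *\<^sub>R a) - g (x + \<sigma> *\<^sub>R a)" for \<sigma>
  have "norm (f s - f 0 - s *\<^sub>R (s *\<^sub>R c)) \<le> (e * s) * s"
  proof (rule norm_increment_le_derivative_deviation[OF s])
    fix \<sigma> assume \<sigma>: "\<sigma> \<in> {0..s}"
    have "x + s *\<^sub>R b + \<sigma> *\<^sub>R a \<in> U" "x + \<sigma> *\<^sub>R a \<in> U"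
      using near[OF \<sigma>, of s] near[OF \<sigma>, of 0] s by (simp_all add: ac_simps)
    from has_vector_derivative_diff[OF has_vector_derivative_along_line[OF dv[OF this(1)]]
        has_vector_derivative_along_line[OF dv[OF this(2)]]]
    show "(f has_vector_derivative f' \<sigma>) (at \<sigma> within {0..s})"
      unfolding f_def f'_def by (rule has_vector_derivative_at_within)
    have "norm (g (x + \<sigma> *\<^sub>R a + s *\<^sub>R b) - g (x + \<sigma> *\<^sub>R a) - s *\<^sub>R c) \<le> e * s"
    proof (rule first_difference_approx[OF s])
      fix \<tau> assume \<tau>: "\<tau> \<in> {0..s}"
      then have "x + \<sigma> *\<^sub>R a + \<tau> *\<^sub>R b \<in> U" using near[OF \<sigma> \<tau>] by blast
      from dg[OF this] show "((\<lambda>t. g (x + \<sigma> *\<^sub>R a + \<tau> *\<^sub>R b + t *\<^sub>R b)) has_vector_derivative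
          h (x + \<sigma> *\<^sub>R a + \<tau> *\<^sub>R b)) (at 0)" .
      show "norm (h (x + \<sigma> *\<^sub>R a + \<tau> *\<^sub>R b) - c) \<le> e" using near[OF \<sigma> \<tau>] by blast
    qed
    then show "norm (f' \<sigma> - s *\<^sub>R c) \<le> e * s" by (simp add: f'_def ac_simps)
  qed
  then show ?thesis by (simp add: f_def algebra_simps)
qed

lemma eventually_second_difference_approx:
  fixes v g h :: "'a::real_normed_vector \<Rightarrow> 'b::real_normed_vector"
  assumes U: "open U" and x: "x \<in> U"
    and dv: "\<And>y. y \<in> U \<Longrightarrow> ((\<lambda>t. v (y + t *\<^sub>R a)) has_vector_derivative g y) (at 0)"
    and dg: "\<And>y. y \<in> U \<Longrightarrow> ((\<lambda>t. g (y + t *\<^sub>R b)) has_vector_derivative h y) (at 0)"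
    and ch: "isCont h x" and e: "0 < e"
  shows "\<forall>\<^sub>F s in at_right 0. norm (v (x + s *\<^sub>R a + s *\<^sub>R b) - v (x + s *\<^sub>R a) - v (x + s *\<^sub>R b) + v x
           - (s * s) *\<^sub>R h x) \<le> e * (s * s)"
proof -
  obtain d0 where d0: "d0 > 0" "ball x d0 \<subseteq> U" using openE[OF U x] by blast
  obtain d1 where d1: "d1 > 0" "\<And>y. dist y x < d1 \<Longrightarrow> dist (h y) (h x) < e"
    using ch e unfolding continuous_at_eps_delta by blast
  define \<delta> where "\<delta> = min d0 d1"
  define r where "r = \<delta> / (norm a + norm b + 1)"
  have pos: "0 < norm a + norm b + 1" by (simp add: add_nonneg_pos)
  then have r: "0 < r" using d0 d1 by (simp add: r_def \<delta>_def)
  have "norm (v (x + s *\<^sub>R a + s *\<^sub>R b) - v (x + s *\<^sub>R a) - v (x + s *\<^sub>R b) + v x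
      - (s * s) *\<^sub>R h x) \<le> e * (s * s)" if s: "0 < s" "s < r" for s
  proof (rule second_difference_approx[OF dv dg less_imp_le[OF s(1)]])
    fix \<sigma> \<tau> assume \<sigma>: "\<sigma> \<in> {0..s}" and \<tau>: "\<tau> \<in> {0..s}"
    have "dist (x + \<sigma> *\<^sub>R a + \<tau> *\<^sub>R b) x \<le> \<sigma> * norm a + \<tau> * norm b"
      using norm_triangle_ineq[of "\<sigma> *\<^sub>R a" "\<tau> *\<^sub>R b"] \<sigma> \<tau> by (simp add: dist_norm add.assoc)
    also have "\<dots> \<le> s * (norm a + norm b)"
      using \<sigma> \<tau> by (simp add: distrib_left add_mono mult_right_mono)
    also have "\<dots> < r * (norm a + norm b + 1)"
      using s by (intro mult_strict_mono) auto
    also have "\<dots> = \<delta>" using pos by (simp add: r_def)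
    finally have close: "dist (x + \<sigma> *\<^sub>R a + \<tau> *\<^sub>R b) x < \<delta>" .
    then have "x + \<sigma> *\<^sub>R a + \<tau> *\<^sub>R b \<in> ball x d0" by (simp add: \<delta>_def dist_commute)
    moreover have "dist (h (x + \<sigma> *\<^sub>R a + \<tau> *\<^sub>R b)) (h x) < e"
      using close by (intro d1(2)) (simp add: \<delta>_def)
    ultimately show "x + \<sigma> *\<^sub>R a + \<tau> *\<^sub>R b \<in> U \<and> norm (h (x + \<sigma> *\<^sub>R a + \<tau> *\<^sub>R b) - h x) \<le> e"
      using d0(2) by (auto simp: dist_norm)
  qed
  then show ?thesis using r unfolding eventually_at_right_field by blast
qed

lemma mixed_partials_symmetric:
  fixes v :: "real^'n \<Rightarrow> 'b::real_normed_vector" and g :: "'n \<Rightarrow> real^'n \<Rightarrow> 'b"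
    and h :: "'n \<Rightarrow> 'n \<Rightarrow> real^'n \<Rightarrow> 'b"
  assumes U: "open U" and x: "x \<in> U"
    and dv: "\<And>i y. y \<in> U \<Longrightarrow> ((\<lambda>t. v (y + t *\<^sub>R axis i 1)) has_vector_derivative g i y) (at 0)"
    and dg: "\<And>i j y. y \<in> U \<Longrightarrow> ((\<lambda>t. g i (y + t *\<^sub>R axis j 1)) has_vector_derivative h i j y) (at 0)"
    and ch: "\<And>i j. continuous_on U (h i j)"
  shows "h i j x = h j i x"
proof -
  have "norm (h i j x - h j i x) \<le> 0 + e" if e: "e > 0" for e
  proof -
    define \<Delta> where "\<Delta> s = v (x + s *\<^sub>R axis i 1 + s *\<^sub>R axis j 1) - v (x + s *\<^sub>R axis i 1)
      - v (x + s *\<^sub>R axis j 1) + v x" for s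
    have cont: "isCont (h k l) x" for k l
      using ch U x continuous_on_eq_continuous_at by blast
    have "\<forall>\<^sub>F s in at_right 0. norm (\<Delta> s - (s * s) *\<^sub>R h i j x) \<le> e / 2 * (s * s)"
      unfolding \<Delta>_def
      by (rule eventually_second_difference_approx[OF U x dv dg cont]) (use e in simp_all)
    moreover have "\<forall>\<^sub>F s in at_right 0. norm (\<Delta> s - (s * s) *\<^sub>R h j i x) \<le> e / 2 * (s * s)"
      using eventually_second_difference_approx[OF U x dv dg cont, of "e / 2" j i] e
      by (simp add: \<Delta>_def ac_simps diff_diff_eq)
    ultimately have "\<forall>\<^sub>F s in at_right 0. 0 < s \<and> norm (\<Delta> s - (s * s) *\<^sub>R h i j x) \<le> e / 2 * (s * s)
        \<and> norm (\<Delta> s - (s * s) *\<^sub>R h j i x) \<le> e / 2 * (s * s)"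
      using eventually_at_right_less[of 0] by eventually_elim blast
    then obtain s :: real where s: "0 < s" and "norm (\<Delta> s - (s * s) *\<^sub>R h i j x) \<le> e / 2 * (s * s)"
      "norm (\<Delta> s - (s * s) *\<^sub>R h j i x) \<le> e / 2 * (s * s)"
      using eventually_happens'[OF trivial_limit_at_right_real] by blast
    moreover have "(s * s) *\<^sub>R (h i j x - h j i x)
        = (\<Delta> s - (s * s) *\<^sub>R h j i x) - (\<Delta> s - (s * s) *\<^sub>R h i j x)"
      by (simp add: scaleR_diff_right)
    ultimately have "norm ((s * s) *\<^sub>R (h i j x - h j i x)) \<le> e * (s * s)"
      using norm_triangle_ineq4[of "\<Delta> s - (s * s) *\<^sub>R h j i x" "\<Delta> s - (s * s) *\<^sub>R h i j x"]
      by simp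
    then show ?thesis using s by simp
  qed
  then show ?thesis using field_le_epsilon[of "norm (h i j x - h j i x)" 0] by simp
qed

subsection \<open>Green's identity for an impedance eigenfunction\<close>

lemma integral_complex_of_real:
  "f integrable_on S \<Longrightarrow> integral S (\<lambda>x. complex_of_real (f x)) = of_real (integral S f)"
  using integral_linear[OF _ bounded_linear_of_real, of f S] by (simp add: o_def)

lemma Re_integral: "f integrable_on S \<Longrightarrow> Re (integral S f) = integral S (\<lambda>x. Re (f x))"
  using integral_linear[OF _ bounded_linear_Re, of f S] by (simp add: o_def)

locale impedance_eigenfunction =
  fixes \<omega> :: real and lam :: complex and v :: "real^'n \<Rightarrow> complex"
    and g :: "'n \<Rightarrow> real^'n \<Rightarrow> complex" and h :: "'n \<Rightarrow> 'n \<Rightarrow> real^'n \<Rightarrow> complex"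
  assumes omega_pos: "0 < \<omega>"
    and nonzero: "\<exists>x\<in>unit_cube. v x \<noteq> 0"
    and cont_v: "continuous_on unit_cube v"
    and cont_g: "\<And>i. continuous_on unit_cube (g i)"
    and deriv_v: "\<And>i x. x \<in> unit_cube \<Longrightarrow> ((\<lambda>t. v (x + t *\<^sub>R axis i 1)) has_vector_derivative g i x)
                   (at 0 within {t. x + t *\<^sub>R axis i 1 \<in> unit_cube})"
    and cont_h: "\<And>i j. continuous_on (interior unit_cube) (h i j)"
    and deriv_g: "\<And>i j x. x \<in> interior unit_cube \<Longrightarrow>
                   ((\<lambda>t. g i (x + t *\<^sub>R axis j 1)) has_vector_derivative h i j x) (at 0)"
    and helmholtz: "\<And>x. x \<in> interior unit_cube \<Longrightarrow>
                   - (\<Sum>i\<in>UNIV. h i i x) - complex_of_real (\<omega>\<^sup>2) * v x = lam * v x"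
    and impedance: "\<And>x i. x \<in> unit_cube \<Longrightarrow>
                   (x $ i = 0 \<longrightarrow> - g i x - \<i> * complex_of_real \<omega> * v x = 0) \<and>
                   (x $ i = 1 \<longrightarrow> g i x - \<i> * complex_of_real \<omega> * v x = 0)"

lemma impedance_eigenpair_imp_eigenfunction:
  assumes "impedance_eigenpair \<omega> lam v" and "0 < \<omega>"
  shows "\<exists>g h. impedance_eigenfunction \<omega> lam v g h"
  using assms unfolding impedance_eigenpair_def
  apply (elim conjE exE)
  subgoal for g h by (intro exI[of _ g] exI[of _ h], unfold_locales) auto
  done

context impedance_eigenfunction
begin

definition ksq :: complex where "ksq = complex_of_real (\<omega>\<^sup>2) + lam"

definition vsq :: "real^'n \<Rightarrow> real" where "vsq x = (cmod (v x))\<^sup>2"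

definition gradsq :: "real^'n \<Rightarrow> real" where "gradsq x = (\<Sum>j\<in>UNIV. (cmod (g j x))\<^sup>2)"

definition mass :: real where "mass = integral unit_cube vsq"

definition energy :: real where "energy = integral unit_cube gradsq"

text \<open>Integrating a function of x with x_i frozen at c over the cube is integrating it over the
  face x_i = c, so this is the L^2 norm of v on the boundary.\<close>

definition boundary_mass :: real where
  "boundary_mass = (\<Sum>i\<in>UNIV. integral unit_cube (\<lambda>x. vsq (coord_upd x i 1) + vsq (coord_upd x i 0)))"

lemma Re_ksq: "Re ksq = \<omega>\<^sup>2 + Re lam" and Im_ksq: "Im ksq = Im lam"
  by (simp_all add: ksq_def)

lemma deriv_v_interior:
  assumes x: "x \<in> interior unit_cube"
  shows "((\<lambda>t. v (x + t *\<^sub>R axis i 1)) has_vector_derivative g i x) (at 0)"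
proof -
  let ?S = "(\<lambda>t. x + t *\<^sub>R axis i (1::real)) -` interior unit_cube"
  have "open ?S" by (rule continuous_open_vimage) (auto intro!: continuous_intros)
  moreover have "0 \<in> ?S" "?S \<subseteq> {t. x + t *\<^sub>R axis i 1 \<in> unit_cube}"
    using x interior_subset by auto
  ultimately have "at 0 within {t. x + t *\<^sub>R axis i 1 \<in> unit_cube} = at 0"
    by (meson at_within_open_subset)
  then show ?thesis using deriv_v[of x i] x interior_subset by auto
qed

lemma h_sym: "x \<in> interior unit_cube \<Longrightarrow> h i j x = h j i x"
  by (rule mixed_partials_symmetric[where U = "interior unit_cube" and v = v and g = g])
     (simp_all add: deriv_v_interior deriv_g cont_h)

lemma laplacian_eq:
  assumes "x \<in> interior unit_cube"
  shows "(\<Sum>i\<in>UNIV. h i i x) = - ksq * v x"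
proof -
  let ?S = "\<Sum>i\<in>UNIV. h i i x" and ?w = "complex_of_real (\<omega>\<^sup>2) * v x"
  have "?S = - (- ?S - ?w) - ?w" by simp
  also have "\<dots> = - ksq * v x" by (simp only: helmholtz[OF assms]) (simp add: ksq_def algebra_simps)
  finally show ?thesis .
qed

lemma g_face_1: "y \<in> unit_cube \<Longrightarrow> y $ i = 1 \<Longrightarrow> g i y = \<i> * complex_of_real \<omega> * v y"
  using impedance[of y i] by simp

lemma g_face_0: "y \<in> unit_cube \<Longrightarrow> y $ i = 0 \<Longrightarrow> g i y = - (\<i> * complex_of_real \<omega> * v y)"
  using impedance[of y i] by (simp add: minus_equation_iff[of "g i y"])

lemma of_real_vsq: "complex_of_real (vsq x) = v x * cnj (v x)"
  by (simp only: vsq_def complex_norm_square)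

lemma of_real_gradsq: "complex_of_real (gradsq x) = (\<Sum>j\<in>UNIV. g j x * cnj (g j x))"
  by (simp only: gradsq_def of_real_sum complex_norm_square)

lemma continuous_on_vsq: "continuous_on unit_cube vsq"
  unfolding vsq_def[abs_def] by (intro continuous_intros cont_v)

lemma continuous_on_gradsq: "continuous_on unit_cube gradsq"
  unfolding gradsq_def[abs_def] by (intro continuous_intros cont_g)

lemma continuous_on_vsq_faces: "continuous_on unit_cube (\<lambda>x. vsq (coord_upd x i 1) + vsq (coord_upd x i 0))"
  by (intro continuous_intros continuous_on_coord_upd_unit_cube continuous_on_vsq) auto

lemma boundary_mass_nonneg: "0 \<le> boundary_mass"
  unfolding boundary_mass_def
  by (intro sum_nonneg integral_nonneg[OF integrable_on_unit_cube[OF continuous_on_vsq_faces]])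
     (simp add: vsq_def)

lemma mass_pos: "0 < mass"
proof -
  obtain x0 where x0: "x0 \<in> unit_cube" "v x0 \<noteq> 0" using nonzero by blast
  have "mass \<noteq> 0"
  proof
    assume "mass = 0"
    have "vsq x0 = 0"
    proof (rule has_integral_0_cbox_imp_0[of 0 "\<chi> j. 1" vsq])
      show "continuous_on (cbox 0 (\<chi> j. 1)) vsq" using continuous_on_vsq by (simp add: unit_cube_eq_cbox)
      show "(vsq has_integral 0) (cbox 0 (\<chi> j. 1))"
        using integrable_integral[OF integrable_on_unit_cube[OF continuous_on_vsq]] \<open>mass = 0\<close>
        by (simp add: mass_def unit_cube_eq_cbox)
    qed (use x0 in \<open>auto simp: vsq_def unit_cube_eq_cbox interval_ne_empty_cart(2)\<close>)
    then show False using x0 by (simp add: vsq_def)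
  qed
  moreover have "mass \<ge> 0" unfolding mass_def
    by (rule integral_nonneg[OF integrable_on_unit_cube[OF continuous_on_vsq]]) (simp add: vsq_def)
  ultimately show ?thesis by simp
qed

lemma integral_energy_density:
  "integral unit_cube (\<lambda>x. complex_of_real (gradsq x) - ksq * complex_of_real (vsq x))
     = complex_of_real energy - ksq * complex_of_real mass"
proof -
  have ig: "gradsq integrable_on unit_cube" and iv: "vsq integrable_on unit_cube"
    by (intro integrable_on_unit_cube continuous_on_gradsq continuous_on_vsq)+
  have "integral unit_cube (\<lambda>x. complex_of_real (gradsq x) - ksq * complex_of_real (vsq x))
      = integral unit_cube (\<lambda>x. complex_of_real (gradsq x))
        - integral unit_cube (\<lambda>x. ksq * complex_of_real (vsq x))"
    by (intro integral_diff integrable_on_cmult_left integrable_on_unit_cube continuous_intros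
        continuous_on_gradsq continuous_on_vsq)
  also have "\<dots> = complex_of_real energy - ksq * complex_of_real mass"
    by (simp only: integral_mult_right integral_complex_of_real[OF ig] integral_complex_of_real[OF iv]
        energy_def mass_def)
  finally show ?thesis .
qed

lemma integral_impedance_flux:
  "integral unit_cube (\<lambda>x. g i (coord_upd x i 1) * cnj (v (coord_upd x i 1))
                           - g i (coord_upd x i 0) * cnj (v (coord_upd x i 0)))
     = \<i> * complex_of_real \<omega> *
         complex_of_real (integral unit_cube (\<lambda>x. vsq (coord_upd x i 1) + vsq (coord_upd x i 0)))"
proof -
  have "g i (coord_upd x i 1) * cnj (v (coord_upd x i 1)) - g i (coord_upd x i 0) * cnj (v (coord_upd x i 0))
      = \<i> * complex_of_real \<omega> * complex_of_real (vsq (coord_upd x i 1) + vsq (coord_upd x i 0))"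
    if "x \<in> unit_cube" for x
    using that by (simp add: g_face_1 g_face_0 coord_upd_in_unit_cube of_real_vsq algebra_simps)
  then have "integral unit_cube (\<lambda>x. g i (coord_upd x i 1) * cnj (v (coord_upd x i 1))
                                     - g i (coord_upd x i 0) * cnj (v (coord_upd x i 0)))
      = integral unit_cube (\<lambda>x. \<i> * complex_of_real \<omega> *
          complex_of_real (vsq (coord_upd x i 1) + vsq (coord_upd x i 0)))"
    by (rule integral_cong)
  then show ?thesis
    by (simp only: integral_mult_right
        integral_complex_of_real[OF integrable_on_unit_cube[OF continuous_on_vsq_faces]])
qed

lemma green_identity:
  "complex_of_real energy - ksq * complex_of_real mass
     = \<i> * complex_of_real \<omega> * complex_of_real boundary_mass"
proof -
  have "integral unit_cube (\<lambda>x. complex_of_real (gradsq x) - ksq * complex_of_real (vsq x))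
      = (\<Sum>i\<in>UNIV. integral unit_cube (\<lambda>x. g i (coord_upd x i 1) * cnj (v (coord_upd x i 1))
                                         - g i (coord_upd x i 0) * cnj (v (coord_upd x i 0))))"
  proof (rule divergence_theorem_unit_cube)
    show "continuous_on unit_cube (\<lambda>x. g i x * cnj (v x))" for i
      by (intro continuous_intros cont_g cont_v)
    show "continuous_on (interior unit_cube) (\<lambda>x. h i i x * cnj (v x) + g i x * cnj (g i x))" for i
      using interior_subset
      by (intro continuous_intros cont_h continuous_on_subset[OF cont_g] continuous_on_subset[OF cont_v])
    show "continuous_on unit_cube (\<lambda>x. complex_of_real (gradsq x) - ksq * complex_of_real (vsq x))"
      by (intro continuous_intros continuous_on_gradsq continuous_on_vsq)
    show "((\<lambda>t. g i (x + t *\<^sub>R axis i 1) * cnj (v (x + t *\<^sub>R axis i 1))) has_vector_derivative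
        h i i x * cnj (v x) + g i x * cnj (g i x)) (at 0)" if "x \<in> interior unit_cube" for i x
      using has_vector_derivative_mult[OF deriv_g[OF that] has_vector_derivative_cnj[OF deriv_v_interior[OF that]]]
      by (simp add: add.commute)
    show "(\<Sum>i\<in>UNIV. h i i x * cnj (v x) + g i x * cnj (g i x))
        = complex_of_real (gradsq x) - ksq * complex_of_real (vsq x)" if "x \<in> interior unit_cube" for x
      by (simp add: sum.distrib sum_distrib_right[symmetric] laplacian_eq[OF that] of_real_gradsq of_real_vsq)
  qed
  then show ?thesis
    by (simp add: integral_energy_density integral_impedance_flux boundary_mass_def sum_distrib_left)
qed

lemma energy_eq: "energy = Re ksq * mass"
  using arg_cong[OF green_identity, of Re] by simp

lemma Im_lam_mass: "- Im lam * mass = \<omega> * boundary_mass"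
  using arg_cong[OF green_identity, of Im] by (simp add: Im_ksq)

end

subsection \<open>The Rellich identity and the eigenvalue estimate\<close>

context impedance_eigenfunction
begin

text \<open>radial_deriv is the Rellich multiplier (x - c) \<cdot> \<nabla>v, c the centre of the cube;
  rellich_flux i is the i-th component of a vector field whose divergence is rellich_density,
  and the prefix d_ marks the partial derivative in direction i.\<close>

definition rad :: "'n \<Rightarrow> real^'n \<Rightarrow> real" where "rad j x = x$j - 1/2"

definition radial_deriv :: "real^'n \<Rightarrow> complex" where
  "radial_deriv x = (\<Sum>j\<in>UNIV. complex_of_real (rad j x) * g j x)"

definition d_radial_deriv :: "'n \<Rightarrow> real^'n \<Rightarrow> complex" where
  "d_radial_deriv i x = g i x + (\<Sum>j\<in>UNIV. complex_of_real (rad j x) * h j i x)"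

definition d_gradsq :: "'n \<Rightarrow> real^'n \<Rightarrow> complex" where
  "d_gradsq i x = (\<Sum>j\<in>UNIV. g j x * cnj (h j i x) + h j i x * cnj (g j x))"

definition d_vsq :: "'n \<Rightarrow> real^'n \<Rightarrow> complex" where
  "d_vsq i x = v x * cnj (g i x) + g i x * cnj (v x)"

definition rellich_flux :: "'n \<Rightarrow> real^'n \<Rightarrow> complex" where
  "rellich_flux i x = g i x * cnj (radial_deriv x) + cnj (g i x) * radial_deriv x
     - complex_of_real (rad i x) * complex_of_real (gradsq x)
     + complex_of_real (Re ksq) * (complex_of_real (rad i x) * complex_of_real (vsq x))"

definition d_rellich_flux :: "'n \<Rightarrow> real^'n \<Rightarrow> complex" where
  "d_rellich_flux i x = g i x * cnj (d_radial_deriv i x) + h i i x * cnj (radial_deriv x)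
     + (cnj (g i x) * d_radial_deriv i x + cnj (h i i x) * radial_deriv x)
     - (complex_of_real (rad i x) * d_gradsq i x + complex_of_real (gradsq x))
     + complex_of_real (Re ksq) * (complex_of_real (rad i x) * d_vsq i x + complex_of_real (vsq x))"

definition rellich_density :: "real^'n \<Rightarrow> complex" where
  "rellich_density x = - (ksq * (v x * cnj (radial_deriv x))) - cnj (ksq * (v x * cnj (radial_deriv x)))
     + complex_of_real ((2 - real CARD('n)) * gradsq x + Re ksq * real CARD('n) * vsq x)
     + complex_of_real (Re ksq) * (v x * cnj (radial_deriv x) + cnj (v x * cnj (radial_deriv x)))"

lemma continuous_on_radial_deriv: "continuous_on unit_cube radial_deriv"
  unfolding radial_deriv_def[abs_def] rad_def by (intro continuous_intros cont_g)

lemma has_vector_derivative_rad: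
  "((\<lambda>t. complex_of_real (rad j (x + t *\<^sub>R axis i 1))) has_vector_derivative
     (if j = i then 1 else 0)) (at 0)"
proof -
  have "(\<lambda>t. rad j (x + t *\<^sub>R axis i 1)) = (\<lambda>t. (x$j - 1/2) + t * (if j = i then 1 else 0))"
    by (auto simp: rad_def axis_def fun_eq_iff)
  moreover have "((\<lambda>t. (x$j - 1/2) + t * (if j = i then 1 else 0)) has_real_derivative
      (if j = i then 1 else 0)) (at 0)"
    by (auto intro!: derivative_eq_intros)
  ultimately have "((\<lambda>t. rad j (x + t *\<^sub>R axis i 1)) has_real_derivative (if j = i then 1 else 0)) (at 0)"
    by simp
  from has_vector_derivative_of_real[OF this] show ?thesis by (cases "j = i") simp_all
qed

lemma has_vector_derivative_radial_deriv:
  assumes x: "x \<in> interior unit_cube"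
  shows "((\<lambda>t. radial_deriv (x + t *\<^sub>R axis i 1)) has_vector_derivative d_radial_deriv i x) (at 0)"
proof -
  have "((\<lambda>t. radial_deriv (x + t *\<^sub>R axis i 1)) has_vector_derivative
      (\<Sum>j\<in>UNIV. complex_of_real (rad j x) * h j i x + (if j = i then 1 else 0) * g j x)) (at 0)"
    unfolding radial_deriv_def
    using has_vector_derivative_mult[OF has_vector_derivative_rad deriv_g[OF x]]
    by (intro has_vector_derivative_sum) simp
  moreover have "(\<Sum>j\<in>UNIV. complex_of_real (rad j x) * h j i x + (if j = i then 1 else 0) * g j x)
      = d_radial_deriv i x"
    by (simp add: d_radial_deriv_def sum.distrib if_distrib[of "\<lambda>c. c * _"] add.commute)
  ultimately show ?thesis by simp
qed

lemma has_vector_derivative_gradsq: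
  assumes x: "x \<in> interior unit_cube"
  shows "((\<lambda>t. complex_of_real (gradsq (x + t *\<^sub>R axis i 1))) has_vector_derivative d_gradsq i x) (at 0)"
  unfolding of_real_gradsq d_gradsq_def
  using has_vector_derivative_mult[OF deriv_g[OF x] has_vector_derivative_cnj[OF deriv_g[OF x]]]
  by (intro has_vector_derivative_sum) simp

lemma has_vector_derivative_vsq:
  assumes x: "x \<in> interior unit_cube"
  shows "((\<lambda>t. complex_of_real (vsq (x + t *\<^sub>R axis i 1))) has_vector_derivative d_vsq i x) (at 0)"
  unfolding of_real_vsq d_vsq_def
  using has_vector_derivative_mult[OF deriv_v_interior[OF x] has_vector_derivative_cnj[OF deriv_v_interior[OF x]]]
  by simp

lemma has_vector_derivative_rellich_flux:
  assumes x: "x \<in> interior unit_cube"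
  shows "((\<lambda>t. rellich_flux i (x + t *\<^sub>R axis i 1)) has_vector_derivative d_rellich_flux i x) (at 0)"
proof -
  note dM = has_vector_derivative_radial_deriv[OF x, of i]
  note d1 = has_vector_derivative_mult[OF deriv_g[OF x, of i i] has_vector_derivative_cnj[OF dM]]
  note d2 = has_vector_derivative_mult[OF has_vector_derivative_cnj[OF deriv_g[OF x, of i i]] dM]
  note d3 = has_vector_derivative_mult[OF has_vector_derivative_rad[of i x i] has_vector_derivative_gradsq[OF x, of i]]
  note d4 = has_vector_derivative_mult_right[OF has_vector_derivative_mult[OF
        has_vector_derivative_rad[of i x i] has_vector_derivative_vsq[OF x, of i]], of "complex_of_real (Re ksq)"]
  show ?thesis
    using has_vector_derivative_add[OF has_vector_derivative_diff[OF has_vector_derivative_add[OF d1 d2] d3] d4]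
    by (simp add: rellich_flux_def d_rellich_flux_def)
qed

text \<open>The Hessian terms of the two sums are the same double sum X once h is symmetric.\<close>

lemma rellich_gradient_terms:
  assumes x: "x \<in> interior unit_cube"
  shows "(\<Sum>i\<in>UNIV. g i x * cnj (d_radial_deriv i x) + cnj (g i x) * d_radial_deriv i x)
         - (\<Sum>i\<in>UNIV. complex_of_real (rad i x) * d_gradsq i x + complex_of_real (gradsq x))
         = complex_of_real ((2 - real CARD('n)) * gradsq x)"
proof -
  define X where "X = (\<Sum>i\<in>UNIV. \<Sum>j\<in>UNIV. complex_of_real (rad j x) *
                        (g i x * cnj (h j i x) + cnj (g i x) * h j i x))"
  have "g i x * cnj (d_radial_deriv i x) + cnj (g i x) * d_radial_deriv i x
      = 2 * (g i x * cnj (g i x)) + (\<Sum>j\<in>UNIV. complex_of_real (rad j x) *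
          (g i x * cnj (h j i x) + cnj (g i x) * h j i x))" for i
    by (simp add: d_radial_deriv_def cnj_sum sum_distrib_left sum.distrib algebra_simps)
  then have S2: "(\<Sum>i\<in>UNIV. g i x * cnj (d_radial_deriv i x) + cnj (g i x) * d_radial_deriv i x)
      = 2 * complex_of_real (gradsq x) + X"
    by (simp add: sum.distrib of_real_gradsq X_def sum_distrib_left)
  have "(\<Sum>i\<in>UNIV. complex_of_real (rad i x) * d_gradsq i x)
      = (\<Sum>i\<in>UNIV. \<Sum>j\<in>UNIV. complex_of_real (rad i x) * (g j x * cnj (h j i x) + h j i x * cnj (g j x)))"
    by (simp add: d_gradsq_def sum_distrib_left)
  also have "\<dots> = (\<Sum>j\<in>UNIV. \<Sum>i\<in>UNIV. complex_of_real (rad i x) * (g j x * cnj (h j i x) + h j i x * cnj (g j x)))"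
    by (rule sum.swap)
  also have "\<dots> = X"
    unfolding X_def by (intro sum.cong refl) (simp add: h_sym[OF x] algebra_simps)
  finally have S3: "(\<Sum>i\<in>UNIV. complex_of_real (rad i x) * d_gradsq i x + complex_of_real (gradsq x))
      = X + of_nat CARD('n) * complex_of_real (gradsq x)"
    by (simp add: sum.distrib)
  show ?thesis unfolding S2 S3 by (simp add: algebra_simps)
qed

lemma sum_d_rellich_flux:
  assumes x: "x \<in> interior unit_cube"
  shows "(\<Sum>i\<in>UNIV. d_rellich_flux i x) = rellich_density x"
proof -
  define M where "M = radial_deriv x"
  define w where "w = v x * cnj M"
  define d where "d = real CARD('n)"
  have S1: "(\<Sum>i\<in>UNIV. h i i x * cnj M + cnj (h i i x) * M) = - (ksq * w) - cnj (ksq * w)"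
  proof -
    have "(\<Sum>i\<in>UNIV. h i i x * cnj M + cnj (h i i x) * M)
        = (\<Sum>i\<in>UNIV. h i i x) * cnj M + cnj (\<Sum>i\<in>UNIV. h i i x) * M"
      by (simp add: sum.distrib sum_distrib_right cnj_sum)
    then show ?thesis by (simp add: laplacian_eq[OF x] w_def algebra_simps)
  qed
  have S4: "(\<Sum>i\<in>UNIV. complex_of_real (Re ksq) * (complex_of_real (rad i x) * d_vsq i x + complex_of_real (vsq x)))
      = complex_of_real (Re ksq) * (w + cnj w) + complex_of_real (Re ksq * d) * complex_of_real (vsq x)"
  proof -
    have "(\<Sum>i\<in>UNIV. complex_of_real (rad i x) * d_vsq i x) = w + cnj w"
      by (simp add: d_vsq_def w_def M_def radial_deriv_def cnj_sum sum_distrib_left sum.distrib algebra_simps)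
    moreover have "(\<Sum>i\<in>UNIV. complex_of_real (Re ksq) *
          (complex_of_real (rad i x) * d_vsq i x + complex_of_real (vsq x)))
        = complex_of_real (Re ksq) * ((\<Sum>i\<in>UNIV. complex_of_real (rad i x) * d_vsq i x)
          + of_real d * complex_of_real (vsq x))"
      by (simp add: sum_distrib_left[symmetric] sum.distrib d_def)
    ultimately show ?thesis by (simp add: algebra_simps)
  qed
  have "(\<Sum>i\<in>UNIV. d_rellich_flux i x)
      = (\<Sum>i\<in>UNIV. h i i x * cnj M + cnj (h i i x) * M)
        + ((\<Sum>i\<in>UNIV. g i x * cnj (d_radial_deriv i x) + cnj (g i x) * d_radial_deriv i x)
           - (\<Sum>i\<in>UNIV. complex_of_real (rad i x) * d_gradsq i x + complex_of_real (gradsq x)))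
        + (\<Sum>i\<in>UNIV. complex_of_real (Re ksq) * (complex_of_real (rad i x) * d_vsq i x + complex_of_real (vsq x)))"
    by (simp add: d_rellich_flux_def M_def sum.distrib sum_subtractf algebra_simps)
  also have "\<dots> = rellich_density x"
    unfolding S1 S4 rellich_gradient_terms[OF x]
    by (simp add: rellich_density_def w_def M_def d_def algebra_simps)
  finally show ?thesis .
qed

lemma continuous_on_rellich_flux: "continuous_on unit_cube (rellich_flux i)"
  unfolding rellich_flux_def[abs_def] rad_def
  by (intro continuous_intros cont_g continuous_on_radial_deriv continuous_on_gradsq continuous_on_vsq)

lemma continuous_on_rellich_density: "continuous_on unit_cube rellich_density"
  unfolding rellich_density_def[abs_def]
  by (intro continuous_intros cont_v continuous_on_radial_deriv continuous_on_gradsq continuous_on_vsq)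

lemma rellich_identity:
  "integral unit_cube rellich_density
     = (\<Sum>i\<in>UNIV. integral unit_cube (\<lambda>x. rellich_flux i (coord_upd x i 1) - rellich_flux i (coord_upd x i 0)))"
proof (rule divergence_theorem_unit_cube[OF continuous_on_rellich_flux _ continuous_on_rellich_density
      has_vector_derivative_rellich_flux sum_d_rellich_flux])
  have "interior unit_cube \<subseteq> unit_cube" by (rule interior_subset)
  then show "continuous_on (interior unit_cube) (d_rellich_flux i)" for i
    unfolding d_rellich_flux_def[abs_def] d_radial_deriv_def[abs_def] d_gradsq_def[abs_def]
      d_vsq_def[abs_def] rad_def of_real_gradsq of_real_vsq radial_deriv_def[abs_def]
    by (intro continuous_intros cont_h continuous_on_subset[OF cont_g] continuous_on_subset[OF cont_v])
qed

lemma abs_Im_v_cnj_radial_deriv_le: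
  assumes y: "y \<in> unit_cube"
  shows "\<bar>Im (v y * cnj (radial_deriv y))\<bar> \<le> (real CARD('n) * \<omega> * vsq y + gradsq y / \<omega>) / 4"
proof -
  have rad: "\<bar>rad j y\<bar> \<le> 1/2" for j
    using y by (auto simp: rad_def unit_cube_def abs_if)
  have "cmod (radial_deriv y) \<le> (\<Sum>j\<in>UNIV. \<bar>rad j y\<bar> * cmod (g j y))"
    unfolding radial_deriv_def by (rule order_trans[OF norm_sum]) (simp add: norm_mult)
  also have "\<dots> \<le> (\<Sum>j\<in>UNIV. cmod (g j y) / 2)"
    using mult_right_mono[OF rad norm_ge_zero] by (intro sum_mono) simp
  finally have "cmod (v y) * cmod (radial_deriv y) \<le> cmod (v y) * (\<Sum>j\<in>UNIV. cmod (g j y) / 2)"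
    by (simp add: mult_left_mono)
  also have "\<dots> = (\<Sum>j\<in>UNIV. cmod (v y) * cmod (g j y)) / 2"
    by (simp add: sum_distrib_left sum_divide_distrib)
  also have "\<dots> \<le> (\<Sum>j\<in>UNIV. (\<omega> * vsq y + (cmod (g j y))\<^sup>2 / \<omega>) / 2) / 2"
  proof (intro divide_right_mono sum_mono)
    fix j
    \<comment> \<open>AM-GM with weights \<omega> and 1/\<omega>\<close>
    have "0 \<le> (\<omega> * cmod (v y) - cmod (g j y))\<^sup>2" by simp
    then show "cmod (v y) * cmod (g j y) \<le> (\<omega> * vsq y + (cmod (g j y))\<^sup>2 / \<omega>) / 2"
      using omega_pos by (simp add: vsq_def field_simps power2_eq_square)
  qed simp
  also have "\<dots> = (real CARD('n) * \<omega> * vsq y + gradsq y / \<omega>) / 4"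
    by (simp add: sum.distrib sum_divide_distrib[symmetric] gradsq_def algebra_simps)
  finally show ?thesis
    using abs_Im_le_cmod[of "v y * cnj (radial_deriv y)"] by (simp add: norm_mult)
qed

lemma Re_rellich_density_ge:
  assumes x: "x \<in> unit_cube"
  shows "((2 - real CARD('n)) - \<bar>Im lam\<bar> / (2 * \<omega>)) * gradsq x
           + (Re ksq * real CARD('n) - \<bar>Im lam\<bar> * real CARD('n) * \<omega> / 2) * vsq x
         \<le> Re (rellich_density x)"
proof -
  define d where "d = real CARD('n)"
  define B where "B = (d * \<omega> * vsq x + gradsq x / \<omega>) / 4"
  define W where "W = Im (v x * cnj (radial_deriv x))"
  have "\<bar>Im lam\<bar> * \<bar>W\<bar> \<le> \<bar>Im lam\<bar> * B"
    unfolding B_def d_def W_def by (rule mult_left_mono[OF abs_Im_v_cnj_radial_deriv_le[OF x]]) simp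
  then have "\<bar>2 * Im lam * W\<bar> \<le> 2 * \<bar>Im lam\<bar> * B" by (simp add: abs_mult)
  then have "- (2 * \<bar>Im lam\<bar> * B) \<le> 2 * Im lam * W" by linarith
  moreover have "Re (rellich_density x) = 2 * Im lam * W + (2 - d) * gradsq x + Re ksq * d * vsq x"
    by (simp add: rellich_density_def Im_ksq d_def W_def algebra_simps)
  moreover have "((2 - d) - \<bar>Im lam\<bar> / (2 * \<omega>)) * gradsq x + (Re ksq * d - \<bar>Im lam\<bar> * d * \<omega> / 2) * vsq x
      = (2 - d) * gradsq x + Re ksq * d * vsq x - 2 * \<bar>Im lam\<bar> * B"
    using omega_pos by (simp add: B_def field_simps)
  ultimately show ?thesis by (simp add: d_def)
qed

lemma Re_rellich_flux_face:
  assumes y: "y \<in> unit_cube"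
  shows "y $ i = 1 \<Longrightarrow> Re (rellich_flux i y)
           = - 2 * \<omega> * Im (v y * cnj (radial_deriv y)) - gradsq y / 2 + Re ksq * vsq y / 2"
    and "y $ i = 0 \<Longrightarrow> Re (rellich_flux i y)
           = 2 * \<omega> * Im (v y * cnj (radial_deriv y)) + gradsq y / 2 - Re ksq * vsq y / 2"
proof -
  have "Re (rellich_flux i y) = 2 * Re (g i y * cnj (radial_deriv y)) - rad i y * gradsq y
      + Re ksq * rad i y * vsq y"
    using cnj_add_mult_eq_Re[of "g i y" "radial_deriv y"] by (simp add: rellich_flux_def)
  then show "y $ i = 1 \<Longrightarrow> Re (rellich_flux i y)
           = - 2 * \<omega> * Im (v y * cnj (radial_deriv y)) - gradsq y / 2 + Re ksq * vsq y / 2"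
    and "y $ i = 0 \<Longrightarrow> Re (rellich_flux i y)
           = 2 * \<omega> * Im (v y * cnj (radial_deriv y)) + gradsq y / 2 - Re ksq * vsq y / 2"
    using g_face_1[OF y] g_face_0[OF y] by (simp_all add: rad_def algebra_simps)
qed

lemma Re_rellich_flux_faces_le:
  assumes x: "x \<in> unit_cube"
  shows "Re (rellich_flux i (coord_upd x i 1) - rellich_flux i (coord_upd x i 0))
           \<le> (real CARD('n) * \<omega>\<^sup>2 + Re ksq) / 2 * (vsq (coord_upd x i 1) + vsq (coord_upd x i 0))"
proof -
  have face: "2 * \<omega> * \<bar>Im (v y * cnj (radial_deriv y))\<bar> - gradsq y / 2 + Re ksq * vsq y / 2
      \<le> (real CARD('n) * \<omega>\<^sup>2 + Re ksq) / 2 * vsq y" if y: "y \<in> unit_cube" for y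
  proof -
    have "2 * \<omega> * \<bar>Im (v y * cnj (radial_deriv y))\<bar>
        \<le> 2 * \<omega> * ((real CARD('n) * \<omega> * vsq y + gradsq y / \<omega>) / 4)"
      using abs_Im_v_cnj_radial_deriv_le[OF y] omega_pos by (simp add: mult_left_mono)
    also have "\<dots> = (real CARD('n) * \<omega>\<^sup>2 * vsq y + gradsq y) / 2"
      using omega_pos by (simp add: field_simps power2_eq_square)
    finally show ?thesis by (simp add: field_simps)
  qed
  define y1 where "y1 = coord_upd x i 1"
  define y0 where "y0 = coord_upd x i 0"
  have y1: "y1 \<in> unit_cube" "y1 $ i = 1" and y0: "y0 \<in> unit_cube" "y0 $ i = 0"
    using x by (simp_all add: y1_def y0_def coord_upd_in_unit_cube)
  define W1 where "W1 = Im (v y1 * cnj (radial_deriv y1))"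
  define W0 where "W0 = Im (v y0 * cnj (radial_deriv y0))"
  have mono: "- (2 * \<omega> * W) \<le> 2 * \<omega> * \<bar>W\<bar>" for W
    using mult_left_mono[OF abs_ge_minus_self[of W], of "2 * \<omega>"] omega_pos by simp
  have "Re (rellich_flux i y1 - rellich_flux i y0)
      = (- (2 * \<omega> * W1) - gradsq y1 / 2 + Re ksq * vsq y1 / 2)
        + (- (2 * \<omega> * W0) - gradsq y0 / 2 + Re ksq * vsq y0 / 2)"
    using Re_rellich_flux_face(1)[OF y1] Re_rellich_flux_face(2)[OF y0] by (simp add: W1_def W0_def)
  also have "\<dots> \<le> (2 * \<omega> * \<bar>W1\<bar> - gradsq y1 / 2 + Re ksq * vsq y1 / 2)
        + (2 * \<omega> * \<bar>W0\<bar> - gradsq y0 / 2 + Re ksq * vsq y0 / 2)"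
    using mono[of W1] mono[of W0] by linarith
  also have "\<dots> \<le> (real CARD('n) * \<omega>\<^sup>2 + Re ksq) / 2 * vsq y1
        + (real CARD('n) * \<omega>\<^sup>2 + Re ksq) / 2 * vsq y0"
    using face[OF y1(1)] face[OF y0(1)] by (simp add: W1_def W0_def)
  finally show ?thesis by (simp add: y1_def y0_def distrib_left)
qed

lemma rellich_inequality:
  "((2 - real CARD('n)) - \<bar>Im lam\<bar> / (2 * \<omega>)) * energy
     + (Re ksq * real CARD('n) - \<bar>Im lam\<bar> * real CARD('n) * \<omega> / 2) * mass
   \<le> (real CARD('n) * \<omega>\<^sup>2 + Re ksq) / 2 * boundary_mass"
    (is "?c1 * _ + ?c2 * _ \<le> ?K * _")
proof -
  have faces: "continuous_on unit_cube (\<lambda>x. rellich_flux i (coord_upd x i 1) - rellich_flux i (coord_upd x i 0))" for i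
    by (intro continuous_intros continuous_on_coord_upd_unit_cube continuous_on_rellich_flux) auto
  have "?c1 * energy + ?c2 * mass = integral unit_cube (\<lambda>x. ?c1 * gradsq x + ?c2 * vsq x)"
  proof -
    have "(\<lambda>x. ?c1 * gradsq x) integrable_on unit_cube" "(\<lambda>x. ?c2 * vsq x) integrable_on unit_cube"
      by (intro integrable_on_unit_cube continuous_intros continuous_on_gradsq continuous_on_vsq)+
    then show ?thesis by (simp add: integral_add energy_def mass_def)
  qed
  also have "\<dots> \<le> integral unit_cube (\<lambda>x. Re (rellich_density x))"
    by (intro integral_le integrable_on_unit_cube continuous_intros continuous_on_gradsq
        continuous_on_vsq continuous_on_rellich_density Re_rellich_density_ge)
  also have "\<dots> = Re (\<Sum>i\<in>UNIV. integral unit_cube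
      (\<lambda>x. rellich_flux i (coord_upd x i 1) - rellich_flux i (coord_upd x i 0)))"
    by (simp add: rellich_identity[symmetric] Re_integral integrable_on_unit_cube[OF continuous_on_rellich_density])
  also have "\<dots> = (\<Sum>i\<in>UNIV. integral unit_cube
      (\<lambda>x. Re (rellich_flux i (coord_upd x i 1) - rellich_flux i (coord_upd x i 0))))"
    by (simp add: Re_sum Re_integral integrable_on_unit_cube[OF faces])
  also have "\<dots> \<le> (\<Sum>i\<in>UNIV. integral unit_cube (\<lambda>x. ?K * (vsq (coord_upd x i 1) + vsq (coord_upd x i 0))))"
    by (intro sum_mono integral_le integrable_on_unit_cube continuous_intros faces
        continuous_on_vsq_faces Re_rellich_flux_faces_le)
  also have "\<dots> = ?K * boundary_mass"
    by (simp add: boundary_mass_def sum_distrib_left)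
  finally show ?thesis .
qed

theorem eigenvalue_estimate:
  "2 * Re ksq * \<omega> \<le> \<bar>Im lam\<bar> * (real CARD('n) * \<omega>\<^sup>2 + Re ksq)"
proof -
  define d where "d = real CARD('n)"
  have "0 \<le> - Im lam * mass" using Im_lam_mass boundary_mass_nonneg omega_pos by simp
  then have "Im lam \<le> 0" using mass_pos by (simp add: mult_le_0_iff)
  then have bm: "boundary_mass = \<bar>Im lam\<bar> * mass / \<omega>"
    using Im_lam_mass omega_pos by (simp add: field_simps)
  have "mass * (((2 - d) - \<bar>Im lam\<bar> / (2 * \<omega>)) * Re ksq + (Re ksq * d - \<bar>Im lam\<bar> * d * \<omega> / 2))
      \<le> mass * ((d * \<omega>\<^sup>2 + Re ksq) / 2 * (\<bar>Im lam\<bar> / \<omega>))"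
    using rellich_inequality unfolding energy_eq bm d_def by (simp add: algebra_simps)
  then have ineq: "((2 - d) - \<bar>Im lam\<bar> / (2 * \<omega>)) * Re ksq + (Re ksq * d - \<bar>Im lam\<bar> * d * \<omega> / 2)
      \<le> (d * \<omega>\<^sup>2 + Re ksq) / 2 * (\<bar>Im lam\<bar> / \<omega>)"
    by (rule mult_left_le_imp_le[OF _ mass_pos])
  define X where "X = \<bar>Im lam\<bar> * (d * \<omega>\<^sup>2 + Re ksq) / (2 * \<omega>)"
  have "((2 - d) - \<bar>Im lam\<bar> / (2 * \<omega>)) * Re ksq + (Re ksq * d - \<bar>Im lam\<bar> * d * \<omega> / 2)
      = 2 * Re ksq - X" "(d * \<omega>\<^sup>2 + Re ksq) / 2 * (\<bar>Im lam\<bar> / \<omega>) = X"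
    using omega_pos by (simp_all add: X_def field_simps power2_eq_square)
  with ineq have "2 * Re ksq * \<omega> \<le> 2 * X * \<omega>" using omega_pos by simp
  also have "\<dots> = \<bar>Im lam\<bar> * (d * \<omega>\<^sup>2 + Re ksq)" using omega_pos by (simp add: X_def)
  finally show ?thesis by (simp add: d_def)
qed

corollary abs_Im_lam_ge:
  assumes lam: "cmod lam \<le> \<rho> * \<omega>\<^sup>2" and \<rho>: "\<rho> < 1"
  shows "2 * (1 - \<rho>) / (real CARD('n) + 2) * \<omega> \<le> \<bar>Im lam\<bar>"
proof -
  define d where "d = real CARD('n)"
  have Re_lam: "\<bar>Re lam\<bar> \<le> \<rho> * \<omega>\<^sup>2" using abs_Re_le_cmod[of lam] lam by linarith
  have "\<rho> * \<omega>\<^sup>2 \<le> \<omega>\<^sup>2" using mult_right_mono[of \<rho> 1 "\<omega>\<^sup>2"] \<rho> by simp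
  then have "\<bar>Im lam\<bar> * (d * \<omega>\<^sup>2 + Re ksq) \<le> \<bar>Im lam\<bar> * ((d + 2) * \<omega>\<^sup>2)"
    using Re_lam by (intro mult_left_mono) (auto simp: Re_ksq algebra_simps)
  moreover have "2 * ((1 - \<rho>) * \<omega>\<^sup>2) * \<omega> \<le> 2 * Re ksq * \<omega>"
    using Re_lam omega_pos by (intro mult_right_mono) (auto simp: Re_ksq algebra_simps)
  ultimately have "(2 * (1 - \<rho>) * \<omega>) * \<omega>\<^sup>2 \<le> (\<bar>Im lam\<bar> * (d + 2)) * \<omega>\<^sup>2"
    using eigenvalue_estimate by (simp add: d_def algebra_simps)
  then have "2 * (1 - \<rho>) * \<omega> \<le> \<bar>Im lam\<bar> * (d + 2)"
    using omega_pos by (simp add: mult_le_cancel_right)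
  then show ?thesis by (simp add: d_def field_simps)
qed

end

theorem theorem5p1:
  fixes \<rho> :: real
  assumes "CARD('n::finite) \<ge> 2"
    and "0 < \<rho>" and "\<rho> < 1"
  shows "\<exists>s>0. \<exists>\<omega>\<^sub>0>0. \<forall>\<omega>\<ge>\<omega>\<^sub>0. \<forall>(lam::complex) (v :: real ^ 'n \<Rightarrow> complex).
           impedance_eigenpair \<omega> lam v \<and> cmod lam \<le> \<rho> * \<omega>\<^sup>2
           \<longrightarrow> \<bar>Im lam\<bar> \<ge> s * \<omega>"
proof (intro exI conjI allI impI)
  show "0 < 2 * (1 - \<rho>) / (real CARD('n) + 2)" using assms(3) by simp
  show "(0::real) < 1" by simp
  fix \<omega> lam and v :: "real ^ 'n \<Rightarrow> complex"
  assume "1 \<le> \<omega>" and "impedance_eigenpair \<omega> lam v \<and> cmod lam \<le> \<rho> * \<omega>\<^sup>2"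
  then obtain g h where "impedance_eigenfunction \<omega> lam v g h" and "cmod lam \<le> \<rho> * \<omega>\<^sup>2"
    using impedance_eigenpair_imp_eigenfunction by (meson less_le_trans zero_less_one)
  then show "2 * (1 - \<rho>) / (real CARD('n) + 2) * \<omega> \<le> \<bar>Im lam\<bar>"
    using assms(3) by (rule impedance_eigenfunction.abs_Im_lam_ge)
qed

end
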